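(* For every mediator $m$ (respectively, advertiser $a$), the Threshold by Partition Mechanism is individually rational for $m$ (resp. $a$), and, for every fixed realization of the mechanism's random choices, truthfulness is a (weakly) dominant strategy for $m$ (resp. $a$).
   Context: Model: finite sets of users $P$ (costs $c(p)\ge0$), mediators $M$ (the sets $P(m)$ partition $P$), advertisers $A$ (private positive integer capacity $u(a)$ and private value $v(a)\ge0$); advertiser $a$ has $u(a)$ slots of value $v(a)$; $B$ is all slots, $B(A')$ the slots of advertisers in $A'$, $P(M')$ the users of mediators in $M'$. Mediator utility: payments received minus total cost of his assigned users; advertiser utility: $n\,v(a)-t$ when assigned $n\le u(a)$ users and charged $t$. Advertisers report capacity and value; mediators report any subset of their users with arbitrary costs (and an order on them); truthful = true report. IR: a truthful player's utility is non-negative. $\tau=|S_c(P,B)|>0$ and $\alpha\in[\tau^{-1},1]$ is known to the mechanism. Costs/values compared with a fixed report-independent tie-breaking rule making them all distinct. Canonical assignment $S_c(P',B')$: order slots by decreasing value $b_1,\dots$, users by increasing cost $p_1,\dots$; include $(p_i,b_i)$ iff $v(b_i)>c(p_i)$; location $i$ refers to $p_i,b_i$. Threshold by Partition Mechanism (on reports): (1) $M_L$ (resp. $A_L$) contains each mediator (advertiser) independently with probability $\min\{17\sqrt[3]{\alpha},1\}$; (2) report-independent orders $\sigma_M$, $\sigma_A$ placing $M_L$, $A_L$ last; (3) each mediator independently to $M_1$ or $M_2$ w.p. $1/2$, each advertiser to $A_1$ or $A_2$ w.p. $1/2$; (4) $\hat p,\hat b$ are the user and slot at location $\lceil(1-4\sqrt[3]{\alpha})|S_c(P(M_2),B(A_2))|\rceil$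 of $S_c(P(M_2),B(A_2))$, or, if $(1-4\sqrt[3]{\alpha})|S_c(P(M_2),B(A_2))|\le0$, a dummy user of cost $-\infty$ and dummy slot of value $\infty$; $\hat P=\{p\in P(M_1):c(p)<c(\hat p)\}$, $\hat B=\{b\in B(A_1):v(b)>v(\hat b)\}$; (5) while there are unassigned users in $\hat P$ and unassigned slots in $\hat B$: take the earliest mediator $m$ in $\sigma_M$ with an unassigned user in $\hat P$ and earliest advertiser $a$ in $\sigma_A$ with an unassigned slot in $\hat B$, assign the lowest-cost unassigned user of $\hat P\cap P(m)$ to an unassigned slot of $\hat B\cap B(a)$, charge $a$ the amount $v(\hat b)$ and pay $m$ the amount $c(\hat p)$. Steps (4)–(5) are repeated with indices 1 and 2 exchanged. *)

theory Defs
  imports Complex_Main "HOL-Library.Product_Lexorder" "HOL-Library.Extended_Real"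
begin

(* Users have type 'u, mediators 'm, advertisers 'a.  A slot is a pair (a, k) with k < capacity(a).
   rk is the fixed, report-independent tie-breaking rule: every number (cost or value) is
   compared together with the rank of the user / slot it belongs to, lexicographically.
   Hence "c(p) < c(q)" means ukey p < ukey q, and "v(b) > c(p)" means bkey b > ukey p. *)

type_synonym ('u,'a) item = "'u + ('a \<times> nat)"

definition ukey :: "(('u,'a) item \<Rightarrow> nat) \<Rightarrow> ('u \<Rightarrow> real) \<Rightarrow> 'u \<Rightarrow> real \<times> nat" where
  "ukey rk c p = (c p, rk (Inl p))"

definition bkey :: "(('u,'a) item \<Rightarrow> nat) \<Rightarrow> ('a \<Rightarrow> real) \<Rightarrow> 'a \<times> nat \<Rightarrow> real \<times> nat" where
  "bkey rk v b = (v (fst b), rk (Inr b))"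

definition slots :: "'a set \<Rightarrow> ('a \<Rightarrow> nat) \<Rightarrow> ('a \<times> nat) set" where
  "slots A' cap = {(a, k). a \<in> A' \<and> k < cap a}"

definition users_sorted :: "(('u,'a) item \<Rightarrow> nat) \<Rightarrow> ('u \<Rightarrow> real) \<Rightarrow> 'u set \<Rightarrow> 'u list" where
  "users_sorted rk c P' = sorted_key_list_of_set (ukey rk c) P'"

definition slots_sorted :: "(('u,'a) item \<Rightarrow> nat) \<Rightarrow> ('a \<Rightarrow> real) \<Rightarrow> ('a \<times> nat) set \<Rightarrow> ('a \<times> nat) list" where
  "slots_sorted rk v B' = rev (sorted_key_list_of_set (bkey rk v) B')"

definition Sc :: "(('u,'a) item \<Rightarrow> nat) \<Rightarrow> ('u \<Rightarrow> real) \<Rightarrow> ('a \<Rightarrow> real)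
                  \<Rightarrow> 'u set \<Rightarrow> ('a \<times> nat) set \<Rightarrow> ('u \<times> ('a \<times> nat)) list" where
  "Sc rk c v P' B' =
     filter (\<lambda>(p, b). ukey rk c p < bkey rk v b) (zip (users_sorted rk c P') (slots_sorted rk v B'))"

(* Steps (4)-(5) of the Threshold by Partition Mechanism for one side s, on the reports
   (reported users Pr with reported costs cr, reported capacities capr and values vr).
   Side s consists of the mediators m with sM m = s and advertisers a with sA a = s
   (s = True: M_1/A_1, s = False: M_2/A_2).
   Result: (list of assigned (user, slot) pairs, payment c(p^) per user, charge v(b^) per slot).
   The while-loop of step (5) matches, one by one, the users of P^ queued by the order sigma_M
   of their mediator (rankM) and, within a mediator, by increasing cost, with the slots of B^
   queued by the order sigma_A of their advertiser (rankA); it stops when one queue is empty.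
   This is exactly the zip of the two queues. *)
definition side_outcome ::
  "(('u,'a) item \<Rightarrow> nat) \<Rightarrow> real \<Rightarrow> ('u \<Rightarrow> 'm) \<Rightarrow> 'a set
   \<Rightarrow> ('m \<Rightarrow> nat) \<Rightarrow> ('a \<Rightarrow> nat) \<Rightarrow> ('m \<Rightarrow> bool) \<Rightarrow> ('a \<Rightarrow> bool)
   \<Rightarrow> 'u set \<Rightarrow> ('u \<Rightarrow> real) \<Rightarrow> ('a \<Rightarrow> nat) \<Rightarrow> ('a \<Rightarrow> real) \<Rightarrow> bool
   \<Rightarrow> ('u \<times> ('a \<times> nat)) list \<times> real \<times> real" where
  "side_outcome rk \<alpha> med A rankM rankA sM sA Pr cr capr vr s =
    (let B = slots A capr;
         L = Sc rk cr vr {p \<in> Pr. sM (med p) \<noteq> s} {b \<in> B. sA (fst b) \<noteq> s};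
         x = (1 - 4 * root 3 \<alpha>) * real (length L)
     in if x \<le> 0 then ([], 0, 0)
        else (let k = nat \<lceil>x\<rceil>;
                  ph = fst (L ! (k - 1)); bh = snd (L ! (k - 1));
                  Ph = {p \<in> Pr. sM (med p) = s \<and> ukey rk cr p < ukey rk cr ph};
                  Bh = {b \<in> B. sA (fst b) = s \<and> bkey rk vr b > bkey rk vr bh};
                  QU = sorted_key_list_of_set (\<lambda>p. (rankM (med p), ukey rk cr p)) Ph;
                  QB = sorted_key_list_of_set (\<lambda>b. (rankA (fst b), snd b)) Bh
              in (zip QU QB, cr ph, vr (fst bh))))"

(* a realization of the mechanism's random choices: M_L, A_L, orders sigma_M, sigma_A
   (given as injective ranks) placing M_L, A_L last; the partitions are given by sM, sA *)
definition valid_realization :: "'m set \<Rightarrow> 'a set \<Rightarrow> 'm set \<Rightarrow> 'a set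
     \<Rightarrow> ('m \<Rightarrow> nat) \<Rightarrow> ('a \<Rightarrow> nat) \<Rightarrow> bool" where
  "valid_realization M A ML AL rankM rankA \<longleftrightarrow>
     ML \<subseteq> M \<and> AL \<subseteq> A \<and> inj_on rankM M \<and> inj_on rankA A \<and>
     (\<forall>m\<in>M - ML. \<forall>m'\<in>ML. rankM m < rankM m') \<and>
     (\<forall>a\<in>A - AL. \<forall>a'\<in>AL. rankA a < rankA a')"

definition med_utility ::
  "(('u,'a) item \<Rightarrow> nat) \<Rightarrow> real \<Rightarrow> ('u \<Rightarrow> 'm) \<Rightarrow> 'a set
   \<Rightarrow> ('m \<Rightarrow> nat) \<Rightarrow> ('a \<Rightarrow> nat) \<Rightarrow> ('m \<Rightarrow> bool) \<Rightarrow> ('a \<Rightarrow> bool)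
   \<Rightarrow> 'u set \<Rightarrow> ('u \<Rightarrow> real) \<Rightarrow> ('a \<Rightarrow> nat) \<Rightarrow> ('a \<Rightarrow> real)
   \<Rightarrow> ('u \<Rightarrow> real) \<Rightarrow> 'm \<Rightarrow> real" where
  "med_utility rk \<alpha> med A rankM rankA sM sA Pr cr capr vr c m =
     (\<Sum>s\<in>{True, False}.
        (case side_outcome rk \<alpha> med A rankM rankA sM sA Pr cr capr vr s of
          (pairs, pay, charge) \<Rightarrow>
            sum_list (map (\<lambda>(p, b). pay - c p) (filter (\<lambda>(p, b). med p = m) pairs))))"

definition adv_count ::
  "(('u,'a) item \<Rightarrow> nat) \<Rightarrow> real \<Rightarrow> ('u \<Rightarrow> 'm) \<Rightarrow> 'a set
   \<Rightarrow> ('m \<Rightarrow> nat) \<Rightarrow> ('a \<Rightarrow> nat) \<Rightarrow> ('m \<Rightarrow> bool) \<Rightarrow> ('a \<Rightarrow> bool)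
   \<Rightarrow> 'u set \<Rightarrow> ('u \<Rightarrow> real) \<Rightarrow> ('a \<Rightarrow> nat) \<Rightarrow> ('a \<Rightarrow> real) \<Rightarrow> 'a \<Rightarrow> nat" where
  "adv_count rk \<alpha> med A rankM rankA sM sA Pr cr capr vr a =
     (\<Sum>s\<in>{True, False}.
        length (filter (\<lambda>(p, b). fst b = a) (fst (side_outcome rk \<alpha> med A rankM rankA sM sA Pr cr capr vr s))))"

definition adv_charge ::
  "(('u,'a) item \<Rightarrow> nat) \<Rightarrow> real \<Rightarrow> ('u \<Rightarrow> 'm) \<Rightarrow> 'a set
   \<Rightarrow> ('m \<Rightarrow> nat) \<Rightarrow> ('a \<Rightarrow> nat) \<Rightarrow> ('m \<Rightarrow> bool) \<Rightarrow> ('a \<Rightarrow> bool)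
   \<Rightarrow> 'u set \<Rightarrow> ('u \<Rightarrow> real) \<Rightarrow> ('a \<Rightarrow> nat) \<Rightarrow> ('a \<Rightarrow> real) \<Rightarrow> 'a \<Rightarrow> real" where
  "adv_charge rk \<alpha> med A rankM rankA sM sA Pr cr capr vr a =
     (\<Sum>s\<in>{True, False}.
        (case side_outcome rk \<alpha> med A rankM rankA sM sA Pr cr capr vr s of
          (pairs, pay, charge) \<Rightarrow> real (length (filter (\<lambda>(p, b). fst b = a) pairs)) * charge))"

definition adv_utility :: "nat \<Rightarrow> real \<Rightarrow> nat \<Rightarrow> real \<Rightarrow> ereal" where
  "adv_utility ua va n t = (if n \<le> ua then ereal (real n * va - t) else -\<infinity>)"

end

(*
  On each side the threshold pair (p^, b^) is read off the canonical assignment of the other side,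
  so no report of a player can move the prices he faces.  A mediator m is paid c(p^) per assigned
  user, and his assigned users are the cheapest (by reported cost) of his reported users below
  c(p^), up to a quota (the slots left over by the mediators before m in sigma_M) that does not
  depend on his report: reporting all users at their true costs picks the most profitable set,
  and every user it picks is profitable.  An advertiser is charged v(b^) per slot and receives
  min N (number of his slots above v(b^)) slots for a quota N independent of his report: the
  truthful report takes as many slots as possible exactly when each of them is worth more than
  its price.
*)
theory Submission
  imports Defs
begin

section \<open>Ranking by keys\<close>

context linorder
begin

definition smallest :: "('b \<Rightarrow> 'a) \<Rightarrow> nat \<Rightarrow> 'b set \<Rightarrow> 'b set" where
  "smallest f n X = {x \<in> X. card {y \<in> X. f y < f x} < n}"

lemma smallest_subset: "smallest f n X \<subseteq> X"
  unfolding smallest_def by auto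

lemma smallest_cong:
  assumes "\<And>x. x \<in> X \<Longrightarrow> f x = g x"
  shows "smallest f n X = smallest g n X"
proof -
  have "{y \<in> X. f y < f x} = {y \<in> X. g y < g x}" if "x \<in> X" for x
    using assms that by auto
  then show ?thesis unfolding smallest_def by auto
qed

lemma smallest_less_key:
  assumes "finite X" "x \<in> smallest f n X" "y \<in> X - smallest f n X"
  shows "f x < f y"
proof (rule ccontr)
  assume "\<not> f x < f y"
  then have "{z \<in> X. f z < f y} \<subseteq> {z \<in> X. f z < f x}" by auto
  then have "card {z \<in> X. f z < f y} \<le> card {z \<in> X. f z < f x}"
    using assms(1) by (intro card_mono) auto
  then show False using assms(2,3) unfolding smallest_def by auto
qed

lemma sorted_key_list_of_set_inj:
  fixes f :: "'b \<Rightarrow> 'a"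
  assumes "finite X" "inj_on f X"
  shows "set (sorted_key_list_of_set f X) = X" and "distinct (sorted_key_list_of_set f X)"
proof -
  interpret folding_insort_key "(\<le>)" "(<)" X f by unfold_locales (rule assms(2))
  show "set (sorted_key_list_of_set f X) = X" using assms(1) by simp
  show "distinct (sorted_key_list_of_set f X)"
    using distinct_sorted_key_list_of_set[of X] distinct_map by blast
qed

lemma sorted_key_list_of_set_cong:
  fixes f g :: "'b \<Rightarrow> 'a"
  assumes "finite X" "inj_on f X" "\<And>x. x \<in> X \<Longrightarrow> f x = g x"
  shows "sorted_key_list_of_set f X = sorted_key_list_of_set g X"
proof -
  interpret f: folding_insort_key "(\<le>)" "(<)" X f by unfold_locales (rule assms(2))
  interpret g: folding_insort_key "(\<le>)" "(<)" X g
    by unfold_locales (use assms(2,3) inj_on_cong in blast)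
  let ?l = "sorted_key_list_of_set f X"
  have map_eq: "map g ?l = map f ?l" using assms(1,3) by (auto intro!: map_cong)
  have "sorted_wrt (<) (map g ?l)" unfolding map_eq by (rule f.strict_sorted_key_list_of_set[OF subset_refl])
  moreover have "set ?l = X" "length ?l = card X"
    using assms(1) f.length_sorted_key_list_of_set[OF subset_refl] by simp_all
  ultimately have "sorted_key_list_of_set g X = ?l"
    using g.sorted_key_list_of_set_unique[OF subset_refl assms(1)] by blast
  then show ?thesis by (rule sym)
qed

lemma card_less_key_nth_sorted_key_list_of_set:
  fixes f :: "'b \<Rightarrow> 'a"
  assumes "finite X" "inj_on f X" "i < card X"
  defines "l \<equiv> sorted_key_list_of_set f X"
  shows "card {y \<in> X. f y < f (l ! i)} = i"
proof -
  interpret folding_insort_key "(\<le>)" "(<)" X f by unfold_locales (rule assms(2))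
  have set_l: "set l = X" and len_l: "length l = card X" and sorted_l: "sorted_wrt (<) (map f l)"
    using assms(1) unfolding l_def by simp_all
  then have "distinct l" by (metis card_distinct)
  have "{y \<in> X. f y < f (l ! i)} = (!) l ` {..<i}"
  proof (intro set_eqI iffI)
    fix y assume y: "y \<in> {y \<in> X. f y < f (l ! i)}"
    then obtain j where j: "j < length l" "y = l ! j" using set_l by (auto simp: in_set_conv_nth)
    have "\<not> i \<le> j"
    proof
      assume "i \<le> j"
      then show False
        using y j sorted_wrt_nth_less[OF sorted_l, where i = i and j = j] by (cases "i = j") auto
    qed
    then show "y \<in> (!) l ` {..<i}" using j by force
  next
    fix y assume "y \<in> (!) l ` {..<i}"
    then obtain j where "j < i" "y = l ! j" by blast
    then show "y \<in> {y \<in> X. f y < f (l ! i)}"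
      using sorted_wrt_nth_less[OF sorted_l, where i = j and j = i] assms(3) len_l set_l nth_mem[of j l] by auto
  qed
  moreover have "inj_on ((!) l) {..<i}"
    using \<open>distinct l\<close> assms(3) len_l unfolding inj_on_def by (simp add: nth_eq_iff_index_eq)
  ultimately show ?thesis by (simp add: card_image)
qed

lemma set_take_sorted_key_list_of_set:
  fixes f :: "'b \<Rightarrow> 'a"
  assumes "finite X" "inj_on f X"
  shows "set (take n (sorted_key_list_of_set f X)) = smallest f n X"
proof -
  interpret folding_insort_key "(\<le>)" "(<)" X f by unfold_locales (rule assms(2))
  define l where "l = sorted_key_list_of_set f X"
  have set_l: "set l = X" and len_l: "length l = card X"
    using assms(1) unfolding l_def by simp_all
  have "x \<in> set (take n l) \<longleftrightarrow> x \<in> smallest f n X" for x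
  proof -
    have "x \<in> set (take n l) \<longleftrightarrow> (\<exists>i < length l. i < n \<and> l ! i = x)"
      by (auto simp: in_set_conv_nth)
    also have "\<dots> \<longleftrightarrow> (\<exists>i < length l. card {y \<in> X. f y < f x} < n \<and> l ! i = x)"
      using card_less_key_nth_sorted_key_list_of_set[OF assms] len_l unfolding l_def by auto
    also have "\<dots> \<longleftrightarrow> x \<in> smallest f n X"
      using set_l unfolding smallest_def by (auto simp: in_set_conv_nth)
    finally show ?thesis .
  qed
  then show ?thesis unfolding l_def by blast
qed

lemma card_smallest:
  fixes f :: "'b \<Rightarrow> 'a"
  assumes "finite X" "inj_on f X"
  shows "card (smallest f n X) = min n (card X)"
proof -
  define l where "l = sorted_key_list_of_set f X"
  have "set l = X" "distinct l" unfolding l_def using sorted_key_list_of_set_inj[OF assms] by simp_all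
  moreover have "length l = card X" using \<open>set l = X\<close> \<open>distinct l\<close> distinct_card by metis
  ultimately have "card (set (take n l)) = min n (card X)"
    by (simp add: distinct_card min.commute)
  then have "card (set (take n (sorted_key_list_of_set f X))) = min n (card X)"
    unfolding l_def .
  then show ?thesis
    using set_take_sorted_key_list_of_set[OF assms] by simp
qed

end

lemma smallest_lex_group:
  fixes r :: "'g \<Rightarrow> nat" and h :: "'x \<Rightarrow> 'k::linorder"
  assumes "finite X" "inj_on r (grp ` X)"
  shows "{x \<in> smallest (\<lambda>x. (r (grp x), h x)) n X. grp x = G}
       = smallest h (n - card {y \<in> X. r (grp y) < r G}) {x \<in> X. grp x = G}"
proof -
  have "card {y \<in> X. (r (grp y), h y) < (r (grp x), h x)}
      = card {y \<in> X. r (grp y) < r G} + card {y \<in> {z \<in> X. grp z = G}. h y < h x}"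
    if "x \<in> X" "grp x = G" for x
  proof -
    have "{y \<in> X. (r (grp y), h y) < (r (grp x), h x)}
        = {y \<in> X. r (grp y) < r G} \<union> {y \<in> {z \<in> X. grp z = G}. h y < h x}"
      using that assms(2) by (auto simp: less_prod_def' inj_on_def)
    moreover have "{y \<in> X. r (grp y) < r G} \<inter> {y \<in> {z \<in> X. grp z = G}. h y < h x} = {}"
      by auto
    ultimately show ?thesis using assms(1) by (simp add: card_Un_disjoint)
  qed
  then show ?thesis unfolding smallest_def by auto
qed

lemma set_zip_subset: "set (zip xs ys) \<subseteq> set xs \<times> set ys"
  by (induction xs ys rule: list_induct2') auto

lemma sum_list_filter_zip_fst:
  assumes "distinct xs"
  shows "sum_list (map (\<lambda>(p, b). g p) (filter (\<lambda>(p, b). Q p) (zip xs ys)))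
       = (\<Sum>p \<in> {p \<in> set (take (length ys) xs). Q p}. g p)"
proof -
  have "sum_list (map (\<lambda>(p, b). g p) (filter (\<lambda>(p, b). Q p) (zip xs ys)))
      = sum_list (map g (filter Q (map fst (zip xs ys))))"
    by (induction xs ys rule: list_induct2') auto
  also have "map fst (zip xs ys) = take (length ys) xs"
    by (simp add: map_fst_zip_take min_def)
  finally show ?thesis
    using assms by (simp add: sum_list_distinct_conv_sum_set distinct_take)
qed

lemma length_filter_zip_snd:
  assumes "distinct ys"
  shows "length (filter (\<lambda>(p, b). Q b) (zip xs ys)) = card {b \<in> set (take (length xs) ys). Q b}"
proof -
  have "length (filter (\<lambda>(p, b). Q b) (zip xs ys)) = length (filter Q (map snd (zip xs ys)))"
    by (induction xs ys rule: list_induct2') auto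
  also have "map snd (zip xs ys) = take (length xs) ys"
    by (simp add: map_snd_zip_take min_def)
  finally show ?thesis
    using assms by (metis distinct_filter distinct_take distinct_card set_filter)
qed

section \<open>Exchange arguments\<close>

lemma sum_le_sum_of_dominating:
  fixes g :: "'x \<Rightarrow> real"
  assumes "finite X" "S \<subseteq> X" "T \<subseteq> X" "card S \<le> card T"
    and dominating: "\<And>x y. x \<in> T \<Longrightarrow> y \<in> X - T \<Longrightarrow> g y \<le> g x"
    and nonneg: "\<And>x. x \<in> T \<Longrightarrow> 0 \<le> g x"
  shows "sum g S \<le> sum g T"
proof -
  have fin: "finite S" "finite T" using assms(1-3) finite_subset by blast+
  have "card (S - T) \<le> card (T - S)"
    using assms(4) fin card_Int_Diff[of S T] card_Int_Diff[of T S] by (simp add: Int_commute)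
  then obtain h where h: "h ` (S - T) \<subseteq> T - S" "inj_on h (S - T)"
    using card_le_inj[of "S - T" "T - S"] fin by auto
  have "sum g (S - T) \<le> sum (g \<circ> h) (S - T)"
  proof (rule sum_mono)
    fix y assume "y \<in> S - T"
    then show "g y \<le> (g \<circ> h) y" using h(1) assms(2) dominating[of "h y" y] by auto
  qed
  also have "\<dots> = sum g (h ` (S - T))"
    using h(2) by (simp add: sum.reindex)
  also have "\<dots> \<le> sum g (T - S)"
    using h(1) fin by (intro sum_mono2 nonneg) auto
  finally show ?thesis
    using fin by (metis add.commute add_right_mono sum.Int_Diff inf_commute)
qed

lemma sum_smallest_below_threshold_le:
  fixes key key' :: "'x \<Rightarrow> 'k::linorder" and g :: "'x \<Rightarrow> real" and K :: 'k and N :: nat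
  assumes "finite X" "R \<subseteq> X" "inj_on key X" "inj_on key' R"
    and mono: "\<And>x y. x \<in> X \<Longrightarrow> y \<in> X \<Longrightarrow> key x < key y \<Longrightarrow> g y \<le> g x"
    and below: "\<And>x. x \<in> X \<Longrightarrow> key x < K \<Longrightarrow> 0 \<le> g x"
    and above: "\<And>x. x \<in> X \<Longrightarrow> \<not> key x < K \<Longrightarrow> g x \<le> 0"
  defines "T \<equiv> smallest key N {x \<in> X. key x < K}"
  shows "0 \<le> sum g T" and "sum g (smallest key' N {x \<in> R. key' x < K}) \<le> sum g T"
proof -
  define B where "B = {x \<in> X. key x < K}"
  define R' where "R' = {x \<in> R. key' x < K}"
  define D where "D = smallest key' N R'"
  have B_X: "B \<subseteq> X" and R'_X: "R' \<subseteq> X"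
    using assms(2) unfolding B_def R'_def by auto
  have T_B: "T \<subseteq> B" and D_R': "D \<subseteq> R'"
    unfolding T_def B_def D_def by (rule smallest_subset)+
  have fin: "finite B" "finite R'" "finite D"
    using assms(1) B_X R'_X D_R' by (meson finite_subset)+
  have below_T: "0 \<le> g x" if "x \<in> T" for x
    using that T_B below unfolding B_def by blast
  show "0 \<le> sum g T" using below_T by (rule sum_nonneg)
  have "sum g D = sum g (D \<inter> B) + sum g (D - B)"
    using fin(3) by (metis sum.Int_Diff)
  moreover have "sum g (D - B) \<le> 0"
    using D_R' R'_X above unfolding B_def by (intro sum_nonpos) blast
  moreover have "sum g (D \<inter> B) \<le> sum g T"
  proof (rule sum_le_sum_of_dominating[OF fin(1) _ T_B])
    have "card D = min N (card R')"
      unfolding D_def by (rule card_smallest[OF fin(2) inj_on_subset[OF assms(4)]]) (simp add: R'_def)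
    moreover have "card T = min N (card B)"
      unfolding T_def B_def[symmetric] by (rule card_smallest[OF fin(1) inj_on_subset[OF assms(3) B_X]])
    moreover have "card (D \<inter> B) \<le> card D" "card (D \<inter> B) \<le> card B"
      using fin by (simp_all add: card_mono)
    ultimately show "card (D \<inter> B) \<le> card T" by simp
    show "g y \<le> g x" if "x \<in> T" "y \<in> B - T" for x y
      using that T_B B_X mono smallest_less_key[OF fin(1), of x key N y] unfolding T_def B_def by blast
  qed (use below_T in auto)
  ultimately show "sum g D \<le> sum g T" by linarith
qed

lemma adv_utility_threshold_le:
  assumes "nD \<le> N" "t \<le> ua" and full: "ch < va \<Longrightarrow> t = ua" and empty: "0 < t \<Longrightarrow> ch \<le> va"
  defines "nT \<equiv> min N t"
  shows "0 \<le> adv_utility ua va nT (real nT * ch)"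
    and "adv_utility ua va nD (real nD * ch) \<le> adv_utility ua va nT (real nT * ch)"
proof -
  have UT: "adv_utility ua va nT (real nT * ch) = ereal (real nT * (va - ch))"
    using assms(2) unfolding nT_def adv_utility_def by (simp add: algebra_simps)
  show "0 \<le> adv_utility ua va nT (real nT * ch)"
    unfolding UT using empty unfolding nT_def by (cases "t = 0") auto
  show "adv_utility ua va nD (real nD * ch) \<le> adv_utility ua va nT (real nT * ch)"
  proof (cases "nD \<le> ua")
    case False
    then show ?thesis unfolding adv_utility_def by simp
  next
    case True
    have "real nD * (va - ch) \<le> real nT * (va - ch)"
    proof (cases "ch < va")
      case True
      then show ?thesis
        using \<open>nD \<le> ua\<close> full assms(1) unfolding nT_def by (intro mult_right_mono) auto
    next
      case False
      then show ?thesis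
        using empty unfolding nT_def by (cases "t = 0") (auto simp: mult_nonneg_nonpos)
    qed
    then show ?thesis using True UT unfolding adv_utility_def by (simp add: algebra_simps)
  qed
qed

section \<open>The mechanism for a fixed realization\<close>

lemma finite_slots:
  assumes "finite A"
  shows "finite (slots A cap)"
proof -
  have "slots A cap = (\<Union>a\<in>A. {a} \<times> {..<cap a})" unfolding slots_def by auto
  then show ?thesis using assms by simp
qed

lemma nth_threshold_in_set:
  fixes \<alpha> :: real
  assumes "0 \<le> \<alpha>" and "\<not> (1 - 4 * root 3 \<alpha>) * real (length L) \<le> 0"
  shows "L ! (nat \<lceil>(1 - 4 * root 3 \<alpha>) * real (length L)\<rceil> - 1) \<in> set L"
proof -
  have "(1 - 4 * root 3 \<alpha>) * real (length L) \<le> real (length L)"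
    using assms(1) mult_right_mono[of "1 - 4 * root 3 \<alpha>" 1 "real (length L)"] by simp
  then have "\<lceil>(1 - 4 * root 3 \<alpha>) * real (length L)\<rceil> \<le> int (length L)"
    by (simp add: ceiling_le_iff)
  moreover have "0 < \<lceil>(1 - 4 * root 3 \<alpha>) * real (length L)\<rceil>" using assms(2) by simp
  ultimately show ?thesis by (intro nth_mem) linarith
qed

lemma own_slots_above_threshold:
  fixes rk :: "('u, 'a) item \<Rightarrow> nat" and cap :: "'a \<Rightarrow> nat" and v :: "'a \<Rightarrow> real"
    and k :: nat and w ch :: real and r :: nat
  assumes "a \<in> A"
  defines "B \<equiv> {b \<in> slots A (cap(a := k)). fst b = a \<and> (ch, r) < bkey rk (v(a := w)) b}"
  shows "card B \<le> k" and "ch < w \<Longrightarrow> card B = k" and "0 < card B \<Longrightarrow> ch \<le> w"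
proof -
  have B_eq: "B = (\<lambda>j. (a, j)) ` {j. j < k \<and> (ch, r) < (w, rk (Inr (a, j)))}"
    using assms(1) unfolding B_def slots_def bkey_def by auto
  have card_B: "card B = card {j. j < k \<and> (ch, r) < (w, rk (Inr (a, j)))}"
    unfolding B_eq by (rule card_image) (simp add: inj_on_def)
  show "card B \<le> k"
    unfolding card_B by (rule order_trans[OF card_mono[OF finite_lessThan] eq_imp_le[OF card_lessThan]]) auto
  show "card B = k" if "ch < w" using that unfolding card_B by simp
  show "ch \<le> w" if "0 < card B" using that unfolding B_eq by (auto simp: card_gt_0_iff)
qed

locale realization =
  fixes P :: "'u set" and M :: "'m set" and A :: "'a set" and med :: "'u \<Rightarrow> 'm"
    and rk :: "('u, 'a) item \<Rightarrow> nat" and \<alpha> :: real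
    and rankM :: "'m \<Rightarrow> nat" and rankA :: "'a \<Rightarrow> nat" and sM :: "'m \<Rightarrow> bool" and sA :: "'a \<Rightarrow> bool"
  assumes finite_users: "finite P" and finite_advertisers: "finite A" and med_users: "med ` P \<subseteq> M"
    and inj_rk: "inj_on rk (Inl ` P \<union> Inr ` (A \<times> UNIV))"
    and alpha_nonneg: "0 \<le> \<alpha>" and inj_rankM: "inj_on rankM M" and inj_rankA: "inj_on rankA A"
begin

abbreviation outcome where
  "outcome \<equiv> side_outcome rk \<alpha> med A rankM rankA sM sA"

lemma inj_ukey: "U \<subseteq> P \<Longrightarrow> inj_on (ukey rk c) U"
  using inj_rk unfolding inj_on_def ukey_def by blast

lemma inj_bkey: "B \<subseteq> slots A cap \<Longrightarrow> inj_on (bkey rk v) B"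
  using inj_rk unfolding inj_on_def bkey_def slots_def by blast

lemma inj_user_queue_key: "U \<subseteq> P \<Longrightarrow> inj_on (\<lambda>p. (rankM (med p), ukey rk c p)) U"
  using inj_ukey unfolding inj_on_def by blast

lemma inj_slot_queue_key:
  assumes "B \<subseteq> slots A cap"
  shows "inj_on (\<lambda>b. (rankA (fst b), snd b)) B"
proof (rule inj_onI)
  fix b b' assume "b \<in> B" "b' \<in> B" and eq: "(rankA (fst b), snd b) = (rankA (fst b'), snd b')"
  then have "fst b \<in> A" "fst b' \<in> A" using assms by (auto simp: slots_def)
  with eq show "b = b'" using inj_rankA by (auto simp: prod_eq_iff dest: inj_onD)
qed

lemma finite_user_subset: "U \<subseteq> P \<Longrightarrow> finite U"
  using finite_users finite_subset by blast

lemma finite_slot_subset: "B \<subseteq> slots A cap \<Longrightarrow> finite B"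
  using finite_slots[OF finite_advertisers] finite_subset by blast

lemma set_users_sorted: "U \<subseteq> P \<Longrightarrow> set (users_sorted rk c U) = U"
  unfolding users_sorted_def by (rule sorted_key_list_of_set_inj(1)[OF finite_user_subset inj_ukey])

lemma set_slots_sorted: "B \<subseteq> slots A cap \<Longrightarrow> set (slots_sorted rk v B) = B"
  unfolding slots_sorted_def by (simp add: sorted_key_list_of_set_inj(1)[OF finite_slot_subset inj_bkey])

lemma set_Sc_subset:
  assumes "U \<subseteq> P" "B \<subseteq> slots A cap"
  shows "set (Sc rk c v U B) \<subseteq> U \<times> B"
  using set_zip_subset[of "users_sorted rk c U" "slots_sorted rk v B"] assms
  unfolding Sc_def set_users_sorted[OF assms(1)] set_slots_sorted[OF assms(2)] by auto

lemma Sc_cong: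
  assumes "U \<subseteq> P" "B \<subseteq> slots A cap"
    and "\<And>p. p \<in> U \<Longrightarrow> c p = c' p" "\<And>b. b \<in> B \<Longrightarrow> v (fst b) = v' (fst b)"
  shows "Sc rk c v U B = Sc rk c' v' U B"
proof -
  have "users_sorted rk c U = users_sorted rk c' U"
    unfolding users_sorted_def using assms(3)
    by (intro sorted_key_list_of_set_cong[OF finite_user_subset[OF assms(1)] inj_ukey[OF assms(1)]])
      (simp add: ukey_def)
  moreover have "slots_sorted rk v B = slots_sorted rk v' B"
    unfolding slots_sorted_def using assms(4)
    by (subst sorted_key_list_of_set_cong[OF finite_slot_subset[OF assms(2)] inj_bkey[OF assms(2)]])
      (simp_all add: bkey_def)
  moreover have "ukey rk c p < bkey rk v b \<longleftrightarrow> ukey rk c' p < bkey rk v' b" if "(p, b) \<in> U \<times> B" for p b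
    using that assms(3,4) by (simp add: ukey_def bkey_def)
  ultimately show ?thesis
    using set_zip_subset[of "users_sorted rk c U" "slots_sorted rk v B"]
    unfolding Sc_def set_users_sorted[OF assms(1)] set_slots_sorted[OF assms(2)]
    by (intro filter_cong) auto
qed

lemma outcome_unfold:
  fixes Pr :: "'u set" and cr :: "'u \<Rightarrow> real" and capr :: "'a \<Rightarrow> nat" and vr :: "'a \<Rightarrow> real" and s :: bool
  defines "L \<equiv> Sc rk cr vr {p \<in> Pr. sM (med p) \<noteq> s} {b \<in> slots A capr. sA (fst b) \<noteq> s}"
  defines "x \<equiv> (1 - 4 * root 3 \<alpha>) * real (length L)"
  defines "ph \<equiv> fst (L ! (nat \<lceil>x\<rceil> - 1))" and "bh \<equiv> snd (L ! (nat \<lceil>x\<rceil> - 1))"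
  shows "outcome Pr cr capr vr s =
    (if x \<le> 0 then ([], 0, 0) else
      (zip (sorted_key_list_of_set (\<lambda>p. (rankM (med p), ukey rk cr p))
              {p \<in> Pr. sM (med p) = s \<and> ukey rk cr p < ukey rk cr ph})
           (sorted_key_list_of_set (\<lambda>b. (rankA (fst b), snd b))
              {b \<in> slots A capr. sA (fst b) = s \<and> bkey rk vr bh < bkey rk vr b}),
       cr ph, vr (fst bh)))"
  unfolding side_outcome_def Let_def L_def x_def ph_def bh_def ..

lemma outcome_assigned:
  assumes "Pr \<subseteq> P"
  shows "set (fst (outcome Pr cr capr vr s))
           \<subseteq> {p \<in> Pr. sM (med p) = s} \<times> {b \<in> slots A capr. sA (fst b) = s}"
proof -
  have "set (zip (sorted_key_list_of_set (\<lambda>p. (rankM (med p), ukey rk cr p))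
                   {p \<in> Pr. sM (med p) = s \<and> ukey rk cr p < ukey rk cr ph})
                 (sorted_key_list_of_set (\<lambda>b. (rankA (fst b), snd b))
                   {b \<in> slots A capr. sA (fst b) = s \<and> bkey rk vr bh < bkey rk vr b}))
      \<subseteq> {p \<in> Pr. sM (med p) = s} \<times> {b \<in> slots A capr. sA (fst b) = s}" for ph bh
  proof -
    have "set (sorted_key_list_of_set (\<lambda>p. (rankM (med p), ukey rk cr p))
            {p \<in> Pr. sM (med p) = s \<and> ukey rk cr p < ukey rk cr ph})
        = {p \<in> Pr. sM (med p) = s \<and> ukey rk cr p < ukey rk cr ph}"
      using assms by (intro sorted_key_list_of_set_inj(1) finite_user_subset inj_user_queue_key) auto
    moreover have "set (sorted_key_list_of_set (\<lambda>b. (rankA (fst b), snd b))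
            {b \<in> slots A capr. sA (fst b) = s \<and> bkey rk vr bh < bkey rk vr b})
        = {b \<in> slots A capr. sA (fst b) = s \<and> bkey rk vr bh < bkey rk vr b}"
      by (intro sorted_key_list_of_set_inj(1) finite_slot_subset inj_slot_queue_key) auto
    ultimately show ?thesis using set_zip_subset by blast
  qed
  then show ?thesis unfolding outcome_unfold by simp
qed

lemma threshold_pair_other_side:
  fixes Pr :: "'u set" and cr :: "'u \<Rightarrow> real" and capr :: "'a \<Rightarrow> nat" and vr :: "'a \<Rightarrow> real" and s :: bool
  defines "L \<equiv> Sc rk cr vr {p \<in> Pr. sM (med p) \<noteq> s} {b \<in> slots A capr. sA (fst b) \<noteq> s}"
  assumes Pr: "Pr \<subseteq> P" and positive: "\<not> (1 - 4 * root 3 \<alpha>) * real (length L) \<le> 0"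
  shows "L ! (nat \<lceil>(1 - 4 * root 3 \<alpha>) * real (length L)\<rceil> - 1)
           \<in> {p \<in> Pr. sM (med p) \<noteq> s} \<times> {b \<in> slots A capr. sA (fst b) \<noteq> s}"
  using nth_threshold_in_set[OF alpha_nonneg positive] Pr
    set_Sc_subset[of "{p \<in> Pr. sM (med p) \<noteq> s}" "{b \<in> slots A capr. sA (fst b) \<noteq> s}" capr cr vr]
  unfolding L_def by blast

lemma outcome_with_other_side_threshold:
  fixes Pr Pr' :: "'u set" and cr cr' :: "'u \<Rightarrow> real" and capr capr' :: "'a \<Rightarrow> nat"
    and vr vr' :: "'a \<Rightarrow> real" and s :: bool
  assumes Pr: "Pr \<subseteq> P" and Pr': "Pr' \<subseteq> P"
    and same_users: "{p \<in> Pr'. sM (med p) \<noteq> s} = {p \<in> Pr. sM (med p) \<noteq> s}"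
    and same_costs: "\<And>p. p \<in> Pr \<Longrightarrow> sM (med p) \<noteq> s \<Longrightarrow> cr' p = cr p"
    and same_slots: "{b \<in> slots A capr'. sA (fst b) \<noteq> s} = {b \<in> slots A capr. sA (fst b) \<noteq> s}"
    and same_values: "\<And>a. sA a \<noteq> s \<Longrightarrow> vr' a = vr a"
  defines "L \<equiv> Sc rk cr vr {p \<in> Pr. sM (med p) \<noteq> s} {b \<in> slots A capr. sA (fst b) \<noteq> s}"
  defines "x \<equiv> (1 - 4 * root 3 \<alpha>) * real (length L)"
  defines "ph \<equiv> fst (L ! (nat \<lceil>x\<rceil> - 1))" and "bh \<equiv> snd (L ! (nat \<lceil>x\<rceil> - 1))"
  shows "outcome Pr' cr' capr' vr' s =
    (if x \<le> 0 then ([], 0, 0) else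
      (zip (sorted_key_list_of_set (\<lambda>p. (rankM (med p), ukey rk cr' p))
              {p \<in> Pr'. sM (med p) = s \<and> ukey rk cr' p < ukey rk cr ph})
           (sorted_key_list_of_set (\<lambda>b. (rankA (fst b), snd b))
              {b \<in> slots A capr'. sA (fst b) = s \<and> bkey rk vr bh < bkey rk vr' b}),
       cr ph, vr (fst bh)))"
proof -
  have L: "Sc rk cr' vr' {p \<in> Pr'. sM (med p) \<noteq> s} {b \<in> slots A capr'. sA (fst b) \<noteq> s} = L"
    unfolding same_users same_slots L_def using Pr by (intro Sc_cong) (auto simp: same_costs same_values)
  have "cr' ph = cr ph \<and> vr' (fst bh) = vr (fst bh)" if "\<not> x \<le> 0"
  proof -
    have "L ! (nat \<lceil>x\<rceil> - 1) \<in> {p \<in> Pr. sM (med p) \<noteq> s} \<times> {b \<in> slots A capr. sA (fst b) \<noteq> s}"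
      unfolding x_def L_def by (rule threshold_pair_other_side[OF Pr]) (use that in \<open>simp add: x_def L_def\<close>)
    then show ?thesis using same_costs same_values unfolding ph_def bh_def by auto
  qed
  then show ?thesis
    unfolding outcome_unfold L x_def[symmetric] ph_def[symmetric] bh_def[symmetric]
    by (cases "x \<le> 0") (simp_all add: ukey_def bkey_def)
qed

lemma med_utility_own_side:
  assumes "Pr \<subseteq> P"
  shows "med_utility rk \<alpha> med A rankM rankA sM sA Pr cr capr vr c m =
    (case outcome Pr cr capr vr (sM m) of (pairs, pay, charge) \<Rightarrow>
       sum_list (map (\<lambda>(p, b). pay - c p) (filter (\<lambda>(p, b). med p = m) pairs)))"
proof -
  obtain pairs pay charge where other: "outcome Pr cr capr vr (\<not> sM m) = (pairs, pay, charge)"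
    by (cases "outcome Pr cr capr vr (\<not> sM m)") auto
  have "filter (\<lambda>(p, b). med p = m) pairs = []"
    using outcome_assigned[OF assms, of cr capr vr "\<not> sM m"] unfolding other
    by (auto simp: filter_empty_conv)
  then show ?thesis unfolding med_utility_def using other by (cases "sM m") simp_all
qed

lemma adv_count_own_side:
  assumes "Pr \<subseteq> P"
  shows "adv_count rk \<alpha> med A rankM rankA sM sA Pr cr capr vr a =
    length (filter (\<lambda>(p, b). fst b = a) (fst (outcome Pr cr capr vr (sA a))))"
proof -
  have "filter (\<lambda>(p, b). fst b = a) (fst (outcome Pr cr capr vr (\<not> sA a))) = []"
    using outcome_assigned[OF assms, of cr capr vr "\<not> sA a"] by (auto simp: filter_empty_conv)
  then show ?thesis unfolding adv_count_def by (cases "sA a") simp_all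
qed

lemma adv_charge_eq:
  assumes "Pr \<subseteq> P"
  shows "adv_charge rk \<alpha> med A rankM rankA sM sA Pr cr capr vr a =
    real (adv_count rk \<alpha> med A rankM rankA sM sA Pr cr capr vr a) * snd (snd (outcome Pr cr capr vr (sA a)))"
proof -
  have "filter (\<lambda>(p, b). fst b = a) (fst (outcome Pr cr capr vr (\<not> sA a))) = []"
    using outcome_assigned[OF assms, of cr capr vr "\<not> sA a"] by (auto simp: filter_empty_conv)
  then show ?thesis
    unfolding adv_charge_def adv_count_own_side[OF assms] by (cases "sA a") (simp_all add: case_prod_unfold)
qed

lemma mediator_users_in_queue:
  assumes "Q \<subseteq> P"
  shows "{p \<in> set (take n (sorted_key_list_of_set (\<lambda>p. (rankM (med p), ukey rk c p))
                {p \<in> Q. sM (med p) = sM m \<and> ukey rk c p < K})). med p = m}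
       = smallest (ukey rk c)
           (n - card {p \<in> Q. sM (med p) = sM m \<and> ukey rk c p < K \<and> rankM (med p) < rankM m})
           {p \<in> Q. med p = m \<and> ukey rk c p < K}"
proof -
  define X where "X = {p \<in> Q. sM (med p) = sM m \<and> ukey rk c p < K}"
  have "X \<subseteq> P" using assms unfolding X_def by auto
  have "inj_on rankM (med ` X)" using \<open>X \<subseteq> P\<close> med_users inj_rankM by (auto intro: inj_on_subset)
  have "{p \<in> set (take n (sorted_key_list_of_set (\<lambda>p. (rankM (med p), ukey rk c p)) X)). med p = m}
      = {p \<in> smallest (\<lambda>p. (rankM (med p), ukey rk c p)) n X. med p = m}"
    by (simp add: set_take_sorted_key_list_of_set finite_user_subset inj_user_queue_key \<open>X \<subseteq> P\<close>)
  also have "\<dots> = smallest (ukey rk c) (n - card {p \<in> X. rankM (med p) < rankM m}) {p \<in> X. med p = m}"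
    by (rule smallest_lex_group[OF finite_user_subset[OF \<open>X \<subseteq> P\<close>] \<open>inj_on rankM (med ` X)\<close>])
  also have "{p \<in> X. med p = m} = {p \<in> Q. med p = m \<and> ukey rk c p < K}" unfolding X_def by auto
  finally show ?thesis unfolding X_def by (simp add: conj_assoc)
qed

lemma advertiser_slots_in_queue:
  shows "{b \<in> set (take n (sorted_key_list_of_set (\<lambda>b. (rankA (fst b), snd b))
                {b \<in> slots A cap. sA (fst b) = sA a \<and> K < bkey rk v b})). fst b = a}
       = smallest snd
           (n - card {b \<in> slots A cap. sA (fst b) = sA a \<and> K < bkey rk v b \<and> rankA (fst b) < rankA a})
           {b \<in> slots A cap. fst b = a \<and> K < bkey rk v b}"
proof -
  define X where "X = {b \<in> slots A cap. sA (fst b) = sA a \<and> K < bkey rk v b}"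
  have "X \<subseteq> slots A cap" unfolding X_def by auto
  have "fst ` X \<subseteq> A" using \<open>X \<subseteq> slots A cap\<close> by (auto simp: slots_def)
  then have "inj_on rankA (fst ` X)" by (rule inj_on_subset[OF inj_rankA])
  have "{b \<in> set (take n (sorted_key_list_of_set (\<lambda>b. (rankA (fst b), snd b)) X)). fst b = a}
      = {b \<in> smallest (\<lambda>b. (rankA (fst b), snd b)) n X. fst b = a}"
    using set_take_sorted_key_list_of_set[OF finite_slot_subset inj_slot_queue_key,
        OF \<open>X \<subseteq> slots A cap\<close> \<open>X \<subseteq> slots A cap\<close>]
    by simp
  also have "\<dots> = smallest snd (n - card {b \<in> X. rankA (fst b) < rankA a}) {b \<in> X. fst b = a}"
    by (rule smallest_lex_group[OF finite_slot_subset[OF \<open>X \<subseteq> slots A cap\<close>] \<open>inj_on rankA (fst ` X)\<close>])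
  also have "{b \<in> X. fst b = a} = {b \<in> slots A cap. fst b = a \<and> K < bkey rk v b}" unfolding X_def by auto
  finally show ?thesis unfolding X_def by (simp add: conj_assoc)
qed

lemma med_utility_eq:
  fixes cr cm :: "'u \<Rightarrow> real" and capr :: "'a \<Rightarrow> nat" and vr :: "'a \<Rightarrow> real"
  assumes Pr: "Pr \<subseteq> P" and Rm: "Rm \<subseteq> {p \<in> P. med p = m}"
  defines "Po \<equiv> {p \<in> Pr. med p \<noteq> m}"
  defines "L \<equiv> Sc rk cr vr {p \<in> Po. sM (med p) \<noteq> sM m} {b \<in> slots A capr. sA (fst b) \<noteq> sM m}"
  defines "x \<equiv> (1 - 4 * root 3 \<alpha>) * real (length L)"
  defines "ph \<equiv> fst (L ! (nat \<lceil>x\<rceil> - 1))" and "bh \<equiv> snd (L ! (nat \<lceil>x\<rceil> - 1))"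
  defines "n \<equiv> length (sorted_key_list_of_set (\<lambda>b. (rankA (fst b), snd b))
                 {b \<in> slots A capr. sA (fst b) = sM m \<and> bkey rk vr bh < bkey rk vr b})"
  defines "E \<equiv> card {p \<in> Po. sM (med p) = sM m \<and> ukey rk cr p < ukey rk cr ph \<and> rankM (med p) < rankM m}"
  shows "med_utility rk \<alpha> med A rankM rankA sM sA (Po \<union> Rm) (\<lambda>p. if med p = m then cm p else cr p) capr vr c m
    = (if x \<le> 0 then 0 else
        (\<Sum>p \<in> smallest (ukey rk cm) (n - E) {p \<in> Rm. ukey rk cm p < ukey rk cr ph}. cr ph - c p))"
proof -
  define Q where "Q = Po \<union> Rm"
  define cq where "cq = (\<lambda>p. if med p = m then cm p else cr p)"
  define QU where "QU = sorted_key_list_of_set (\<lambda>p. (rankM (med p), ukey rk cq p))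
                          {p \<in> Q. sM (med p) = sM m \<and> ukey rk cq p < ukey rk cr ph}"
  have Po_P: "Po \<subseteq> P" and Q_P: "Q \<subseteq> P" using Pr Rm unfolding Q_def Po_def by auto
  have outcome: "outcome Q cq capr vr (sM m) = (if x \<le> 0 then ([], 0, 0) else
      (zip QU (sorted_key_list_of_set (\<lambda>b. (rankA (fst b), snd b))
                 {b \<in> slots A capr. sA (fst b) = sM m \<and> bkey rk vr bh < bkey rk vr b}),
       cr ph, vr (fst bh)))"
    unfolding QU_def x_def ph_def bh_def L_def
    by (rule outcome_with_other_side_threshold[OF Po_P Q_P]) (use Rm in \<open>auto simp: Q_def cq_def Po_def\<close>)
  have "{p \<in> set (take n QU). med p = m}
      = smallest (ukey rk cq) (n - E) {p \<in> Q. med p = m \<and> ukey rk cq p < ukey rk cr ph}"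
  proof -
    have "{p \<in> Q. sM (med p) = sM m \<and> ukey rk cq p < ukey rk cr ph \<and> rankM (med p) < rankM m}
        = {p \<in> Po. sM (med p) = sM m \<and> ukey rk cr p < ukey rk cr ph \<and> rankM (med p) < rankM m}"
      using Rm unfolding Q_def Po_def cq_def ukey_def by auto
    then show ?thesis using mediator_users_in_queue[OF Q_P] unfolding QU_def E_def by simp
  qed
  also have "\<dots> = smallest (ukey rk cm) (n - E) {p \<in> Rm. ukey rk cm p < ukey rk cr ph}"
  proof -
    have "{p \<in> Q. med p = m \<and> ukey rk cq p < ukey rk cr ph} = {p \<in> Rm. ukey rk cm p < ukey rk cr ph}"
      using Rm unfolding Q_def Po_def cq_def ukey_def by auto
    then show ?thesis using Rm by (simp, intro smallest_cong) (auto simp: cq_def ukey_def)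
  qed
  finally have users: "{p \<in> set (take n QU). med p = m}
      = smallest (ukey rk cm) (n - E) {p \<in> Rm. ukey rk cm p < ukey rk cr ph}" .
  have "distinct QU"
    unfolding QU_def using Q_P by (intro sorted_key_list_of_set_inj(2) finite_user_subset inj_user_queue_key) auto
  then show ?thesis
    unfolding Q_def[symmetric] cq_def[symmetric] med_utility_own_side[OF Q_P] outcome
    by (simp add: sum_list_filter_zip_fst n_def[symmetric] users)
qed

lemma mediator_truthful:
  fixes c c' cr :: "'u \<Rightarrow> real" and capr :: "'a \<Rightarrow> nat" and vr :: "'a \<Rightarrow> real"
  assumes Pr: "Pr \<subseteq> P" and R: "R \<subseteq> {p \<in> P. med p = m}"
  defines "UT \<equiv> med_utility rk \<alpha> med A rankM rankA sM sA ({p \<in> Pr. med p \<noteq> m} \<union> {p \<in> P. med p = m})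
                  (\<lambda>p. if med p = m then c p else cr p) capr vr c m"
  defines "UD \<equiv> med_utility rk \<alpha> med A rankM rankA sM sA ({p \<in> Pr. med p \<noteq> m} \<union> R)
                  (\<lambda>p. if med p = m then c' p else cr p) capr vr c m"
  shows "0 \<le> UT \<and> UD \<le> UT"
proof -
  note UT_eq =
    med_utility_eq[OF Pr order_refl, where m = m and cr = cr and cm = c and capr = capr and vr = vr]
  note UD_eq = med_utility_eq[OF Pr R, where cr = cr and cm = c' and capr = capr and vr = vr]
  have "0 \<le> (\<Sum>p \<in> smallest (ukey rk c) N {p \<in> {p \<in> P. med p = m}. ukey rk c p < K}. pay - c p) \<and>
        (\<Sum>p \<in> smallest (ukey rk c') N {p \<in> R. ukey rk c' p < K}. pay - c p)
          \<le> (\<Sum>p \<in> smallest (ukey rk c) N {p \<in> {p \<in> P. med p = m}. ukey rk c p < K}. pay - c p)"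
    if "K = (pay, r)" for K pay r N
    using R that finite_users
    by (intro conjI sum_smallest_below_threshold_le) (auto simp: ukey_def intro: inj_ukey)
  then show ?thesis unfolding UT_def UD_def UT_eq UD_eq by (simp add: ukey_def)
qed

lemma adv_count_charge_eq:
  fixes cr :: "'u \<Rightarrow> real" and capr :: "'a \<Rightarrow> nat" and vr :: "'a \<Rightarrow> real"
    and a :: 'a and k :: nat and w :: real
  assumes Pr: "Pr \<subseteq> P"
  defines "L \<equiv> Sc rk cr vr {p \<in> Pr. sM (med p) \<noteq> sA a} {b \<in> slots A capr. sA (fst b) \<noteq> sA a}"
  defines "x \<equiv> (1 - 4 * root 3 \<alpha>) * real (length L)"
  defines "ph \<equiv> fst (L ! (nat \<lceil>x\<rceil> - 1))" and "bh \<equiv> snd (L ! (nat \<lceil>x\<rceil> - 1))"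
  defines "n \<equiv> length (sorted_key_list_of_set (\<lambda>p. (rankM (med p), ukey rk cr p))
                 {p \<in> Pr. sM (med p) = sA a \<and> ukey rk cr p < ukey rk cr ph})"
  defines "E \<equiv> card {b \<in> slots A capr. sA (fst b) = sA a \<and> bkey rk vr bh < bkey rk vr b \<and> rankA (fst b) < rankA a}"
  defines "count \<equiv> adv_count rk \<alpha> med A rankM rankA sM sA Pr cr (capr(a := k)) (vr(a := w)) a"
  shows "count = (if x \<le> 0 then 0 else
           min (n - E) (card {b \<in> slots A (capr(a := k)). fst b = a \<and> bkey rk vr bh < bkey rk (vr(a := w)) b}))"
    and "adv_charge rk \<alpha> med A rankM rankA sM sA Pr cr (capr(a := k)) (vr(a := w)) a
           = (if x \<le> 0 then 0 else real count * vr (fst bh))"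
proof -
  define cap' where "cap' = capr(a := k)"
  define v' where "v' = vr(a := w)"
  define QB where "QB = sorted_key_list_of_set (\<lambda>b. (rankA (fst b), snd b))
                          {b \<in> slots A cap'. sA (fst b) = sA a \<and> bkey rk vr bh < bkey rk v' b}"
  have outcome: "outcome Pr cr cap' v' (sA a) = (if x \<le> 0 then ([], 0, 0) else
      (zip (sorted_key_list_of_set (\<lambda>p. (rankM (med p), ukey rk cr p))
              {p \<in> Pr. sM (med p) = sA a \<and> ukey rk cr p < ukey rk cr ph}) QB,
       cr ph, vr (fst bh)))"
    unfolding QB_def x_def ph_def bh_def L_def
    by (rule outcome_with_other_side_threshold[OF Pr Pr])
      (auto simp: cap'_def v'_def slots_def split: if_splits)
  have count_eq: "count = length (filter (\<lambda>(p, b). fst b = a) (fst (outcome Pr cr cap' v' (sA a))))"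
    unfolding count_def cap'_def v'_def by (rule adv_count_own_side[OF Pr])
  show "count = (if x \<le> 0 then 0 else
           min (n - E) (card {b \<in> slots A (capr(a := k)). fst b = a \<and> bkey rk vr bh < bkey rk (vr(a := w)) b}))"
  proof (cases "x \<le> 0")
    case True
    then show ?thesis unfolding count_eq outcome by simp
  next
    case False
    define B where "B = {b \<in> slots A cap'. fst b = a \<and> bkey rk vr bh < bkey rk v' b}"
    have "{b \<in> slots A cap'. sA (fst b) = sA a \<and> bkey rk vr bh < bkey rk v' b \<and> rankA (fst b) < rankA a}
        = {b \<in> slots A capr. sA (fst b) = sA a \<and> bkey rk vr bh < bkey rk vr b \<and> rankA (fst b) < rankA a}"
      unfolding cap'_def v'_def slots_def bkey_def by auto
    then have "{b \<in> set (take n QB). fst b = a} = smallest snd (n - E) B"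
      using advertiser_slots_in_queue[of n cap' a "bkey rk vr bh" v'] unfolding QB_def B_def E_def by simp
    moreover have "distinct QB"
      unfolding QB_def by (intro sorted_key_list_of_set_inj(2) finite_slot_subset inj_slot_queue_key) auto
    moreover have "card (smallest snd (n - E) B) = min (n - E) (card B)"
      by (rule card_smallest) (auto simp: B_def intro: finite_slot_subset inj_onI prod_eqI)
    ultimately show ?thesis
      unfolding cap'_def[symmetric] v'_def[symmetric] B_def[symmetric] count_eq outcome using False
      by (simp add: length_filter_zip_snd n_def[symmetric])
  qed
  show "adv_charge rk \<alpha> med A rankM rankA sM sA Pr cr (capr(a := k)) (vr(a := w)) a
           = (if x \<le> 0 then 0 else real count * vr (fst bh))"
    unfolding adv_charge_eq[OF Pr] cap'_def[symmetric] v'_def[symmetric] outcome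
    by (simp add: count_def cap'_def v'_def)
qed

lemma adv_outcome_threshold:
  fixes cr :: "'u \<Rightarrow> real" and capr :: "'a \<Rightarrow> nat" and vr :: "'a \<Rightarrow> real" and a :: 'a
  assumes Pr: "Pr \<subseteq> P"
  obtains
    (inactive) "\<And>k w. adv_count rk \<alpha> med A rankM rankA sM sA Pr cr (capr(a := k)) (vr(a := w)) a = 0"
      "\<And>k w. adv_charge rk \<alpha> med A rankM rankA sM sA Pr cr (capr(a := k)) (vr(a := w)) a = 0"
  | (active) N ch r where
      "\<And>k w. adv_count rk \<alpha> med A rankM rankA sM sA Pr cr (capr(a := k)) (vr(a := w)) a
         = min N (card {b \<in> slots A (capr(a := k)). fst b = a \<and> (ch, r) < bkey rk (vr(a := w)) b})"
      "\<And>k w. adv_charge rk \<alpha> med A rankM rankA sM sA Pr cr (capr(a := k)) (vr(a := w)) a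
         = real (adv_count rk \<alpha> med A rankM rankA sM sA Pr cr (capr(a := k)) (vr(a := w)) a) * ch"
proof -
  define L where "L = Sc rk cr vr {p \<in> Pr. sM (med p) \<noteq> sA a} {b \<in> slots A capr. sA (fst b) \<noteq> sA a}"
  define x where "x = (1 - 4 * root 3 \<alpha>) * real (length L)"
  define ph where "ph = fst (L ! (nat \<lceil>x\<rceil> - 1))"
  define bh where "bh = snd (L ! (nat \<lceil>x\<rceil> - 1))"
  define n where "n = length (sorted_key_list_of_set (\<lambda>p. (rankM (med p), ukey rk cr p))
                 {p \<in> Pr. sM (med p) = sA a \<and> ukey rk cr p < ukey rk cr ph})"
  define E where "E = card {b \<in> slots A capr. sA (fst b) = sA a \<and> bkey rk vr bh < bkey rk vr b \<and> rankA (fst b) < rankA a}"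
  note count = adv_count_charge_eq(1)[OF Pr, where cr = cr and capr = capr and vr = vr and a = a,
      folded L_def, folded x_def, folded ph_def bh_def, folded n_def E_def]
  note charge = adv_count_charge_eq(2)[OF Pr, where cr = cr and capr = capr and vr = vr and a = a,
      folded L_def, folded x_def, folded ph_def bh_def, folded n_def E_def]
  show thesis
  proof (cases "x \<le> 0")
    case True
    then show thesis using count charge by (intro inactive) simp_all
  next
    case False
    then show thesis using count charge
      by (intro active[of "n - E" "vr (fst bh)" "rk (Inr bh)"]) (simp_all add: bkey_def)
  qed
qed

lemma advertiser_truthful:
  fixes cr :: "'u \<Rightarrow> real" and capr u :: "'a \<Rightarrow> nat" and vr v :: "'a \<Rightarrow> real"
    and k :: nat and w :: real
  assumes Pr: "Pr \<subseteq> P" and a: "a \<in> A"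
  defines "UT \<equiv> adv_utility (u a) (v a)
              (adv_count rk \<alpha> med A rankM rankA sM sA Pr cr (capr(a := u a)) (vr(a := v a)) a)
              (adv_charge rk \<alpha> med A rankM rankA sM sA Pr cr (capr(a := u a)) (vr(a := v a)) a)"
  defines "UD \<equiv> adv_utility (u a) (v a)
              (adv_count rk \<alpha> med A rankM rankA sM sA Pr cr (capr(a := k)) (vr(a := w)) a)
              (adv_charge rk \<alpha> med A rankM rankA sM sA Pr cr (capr(a := k)) (vr(a := w)) a)"
  shows "0 \<le> UT \<and> UD \<le> UT"
proof (cases rule: adv_outcome_threshold[OF Pr, where cr = cr and capr = capr and vr = vr and a = a,
      case_names inactive active])
  case inactive
  then show ?thesis unfolding UT_def UD_def by (simp add: adv_utility_def)
next
  case (active N ch r)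
  note slots = own_slots_above_threshold[OF a,
      where rk = rk and cap = capr and k = "u a" and v = vr and w = "v a" and ch = ch and r = r]
  show ?thesis
    unfolding UT_def UD_def active
    by (intro conjI adv_utility_threshold_le min.cobounded1 slots) auto
qed

end

theorem lemma21:
  fixes P :: "'u set" and c :: "'u \<Rightarrow> real" and med :: "'u \<Rightarrow> 'm" and M :: "'m set"
    and A :: "'a set" and u :: "'a \<Rightarrow> nat" and v :: "'a \<Rightarrow> real"
    and \<alpha> :: real and rk :: "('u,'a) item \<Rightarrow> nat"
  assumes "finite P" and "finite M" and "finite A"
    and "med ` P \<subseteq> M"
    and "\<forall>p\<in>P. c p \<ge> 0"
    and "\<forall>a\<in>A. u a \<ge> 1 \<and> v a \<ge> 0"
    and "inj_on rk (Inl ` P \<union> Inr ` (A \<times> UNIV))"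
    and "length (Sc rk c v P (slots A u)) > 0"
    and "1 / real (length (Sc rk c v P (slots A u))) \<le> \<alpha>" and "\<alpha> \<le> 1"
  shows
    "(\<forall>m\<in>M. \<forall>ML AL rankM rankA sM sA. valid_realization M A ML AL rankM rankA \<longrightarrow>
       (\<forall>Pr cr capr vr R c'.
          Pr \<subseteq> P \<and> (\<forall>a\<in>A. capr a \<ge> 1 \<and> vr a \<ge> 0) \<and> R \<subseteq> {p\<in>P. med p = m} \<longrightarrow>
          (let PT = {p\<in>Pr. med p \<noteq> m} \<union> {p\<in>P. med p = m};
               cT = (\<lambda>p. if med p = m then c p else cr p);
               PD = {p\<in>Pr. med p \<noteq> m} \<union> R;
               cD = (\<lambda>p. if med p = m then c' p else cr p);
               UT = med_utility rk \<alpha> med A rankM rankA sM sA PT cT capr vr c m;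
               UD = med_utility rk \<alpha> med A rankM rankA sM sA PD cD capr vr c m
           in 0 \<le> UT \<and> UD \<le> UT)))
   \<and>
    (\<forall>a\<in>A. \<forall>ML AL rankM rankA sM sA. valid_realization M A ML AL rankM rankA \<longrightarrow>
       (\<forall>Pr cr capr vr k w.
          Pr \<subseteq> P \<and> (\<forall>a'\<in>A. capr a' \<ge> 1 \<and> vr a' \<ge> 0) \<and> k \<ge> 1 \<and> w \<ge> 0 \<longrightarrow>
          (let capT = capr(a := u a); vT = vr(a := v a);
               capD = capr(a := k); vD = vr(a := w);
               UT = adv_utility (u a) (v a)
                      (adv_count rk \<alpha> med A rankM rankA sM sA Pr cr capT vT a)
                      (adv_charge rk \<alpha> med A rankM rankA sM sA Pr cr capT vT a);
               UD = adv_utility (u a) (v a)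
                      (adv_count rk \<alpha> med A rankM rankA sM sA Pr cr capD vD a)
                      (adv_charge rk \<alpha> med A rankM rankA sM sA Pr cr capD vD a)
           in 0 \<le> UT \<and> UD \<le> UT)))"
proof -
  \<comment> \<open>Besides finiteness and the tie-breaking, only \<open>0 \<le> \<alpha>\<close> is needed; it follows from \<open>1/\<tau> \<le> \<alpha>\<close>.\<close>
  have "0 < 1 / real (length (Sc rk c v P (slots A u)))" using assms(8) by simp
  then have "0 \<le> \<alpha>" using assms(9) by linarith
  then have realization: "realization P M A med rk \<alpha> rankM rankA"
    if "valid_realization M A ML0 AL0 rankM rankA" for ML0 AL0 rankM rankA
    using that assms(1,3,4,7) unfolding realization_def valid_realization_def by blast
  show ?thesis
    unfolding Let_def
    by (rule conjI; intro ballI allI impI; elim conjE;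
        rule realization.mediator_truthful[OF realization] realization.advertiser_truthful[OF realization];
        assumption)
qed

end
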